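(* Let $V$ be a finite dimensional real or complex vector space with $\dim V=n$, let $B:V\to V$ be an invertible linear map, let $v_1,\dots,v_k\in V$ and $p_1,\dots,p_k\in V^*$, and let $$B'=B+\sum_{i=1}^{k}v_i\otimes p_i .$$ Put $u_i=B^{-1}v_i$ for $i=1,\dots,k$ and $A=\mathrm{id}_V+\sum_{i=1}^{k}u_i\otimes p_i$. If $\det A\neq 0$, then $B'$ is invertible and $$(B')^{-1}=\frac{1}{\det A}B^{-1}+\frac{1}{\det A}\left(\sum_{i=1}^{\min(n-1,k)}\ \sum_{1\le j_1<\dots<j_i\le k}(u_{j_1},p_{j_1})\,\square\,\cdots\,\square\,(u_{j_i},p_{j_i})\right)B^{-1}.$$
   Context: For $v\in V$ and $p\in V^*$, $v\otimes p$ denotes the linear map $V\to V$, $x\mapsto p(x)\,v$. For covectors $q_1,\dots,q_m\in V^*$ and vectors $w_1,\dots,w_m\in V$, $(q_1\wedge\dots\wedge q_m)(w_1,\dots,w_m)=\det\bigl[q_a(w_b)\bigr]_{a,b=1}^{m}$. For $\dim V=n\ge 2$, $1\le i\le n-1$, vectors $z_1,\dots,z_i\in V$ and covectors $p_1,\dots,p_i\in V^*$, the operator $(z_1,p_1)\,\square\,\cdots\,\square\,(z_i,p_i):V\to V$ is the unique linear map $T$ such that $q(Tv)=(q\wedge p_1\wedge\dots\wedge p_i)(v,z_1,\dots,z_i)$ for all $v\in V$, $q\in V^*$. Empty sums are zero. *)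

theory Defs
  imports "HOL-Analysis.Analysis" "HOL-Combinatorics.Permutations"
begin

text \<open>V = 'k^'n (dimension n = CARD('n)); covectors are also represented by
  elements of 'k^'n via the pairing below; linear maps V \<rightarrow> V are matrices
  'k^'n^'n acting by *v.\<close>

definition pairing :: "'k::field^'n \<Rightarrow> 'k^'n \<Rightarrow> 'k" where
  "pairing p x = (\<Sum>i\<in>UNIV. p $ i * x $ i)"

definition outer :: "'k::field^'n \<Rightarrow> 'k^'n \<Rightarrow> 'k^'n^'n" where
  "outer v p = (\<chi> r c. v $ r * p $ c)"

definition det_nat :: "nat \<Rightarrow> (nat \<Rightarrow> nat \<Rightarrow> 'k::field) \<Rightarrow> 'k" where
  "det_nat m M = (\<Sum>\<sigma> | \<sigma> permutes {..<m}. of_int (sign \<sigma>) * (\<Prod>a<m. M a (\<sigma> a)))"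

text \<open>(q_1 \<and> ... \<and> q_m)(w_1,...,w_m) = det [q_a(w_b)]\<close>
definition wedge_eval :: "('k::field^'n) list \<Rightarrow> ('k^'n) list \<Rightarrow> 'k" where
  "wedge_eval qs ws = det_nat (length qs) (\<lambda>a b. pairing (qs ! a) (ws ! b))"

text \<open>(z_1,p_1) \<box> ... \<box> (z_i,p_i): the linear map T with
  q(T v) = (q \<and> p_1 \<and> ... \<and> p_i)(v, z_1, ..., z_i); its matrix entry (r,c)
  is obtained with q = e_r, v = e_c.\<close>
definition box :: "(('k::field^'n) \<times> ('k^'n)) list \<Rightarrow> 'k^'n^'n" where
  "box zps = (\<chi> r c. wedge_eval (axis r 1 # map snd zps) (axis c 1 # map fst zps))"

end

theory Submission
  imports Defs
begin

text \<open>Since B' = B A with A = I + \<Sum>_i u_i \<otimes> p_i, it suffices to invert A.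
  Expanding det (I + \<Sum>_{i\<in>K} u_i \<otimes> p_i) multilinearly in the rows and matching the
  surviving terms, which are indexed by partial injections from coordinates to K, with the row
  expansions of the minors of the matrix [p_a(u_b)] gives the principal-minor formula
  det (I + \<Sum>_{i\<in>K} u_i \<otimes> p_i) = \<Sum>_{J\<subseteq>K} det [p_a(u_b)]_{a,b\<in>J}.
  Applied to A + e_c \<otimes> e_r, the new terms are the (r,c) entries of the boxes, while the
  matrix determinant lemma gives det A (1 + (A^-1)_rc); hence det A \<cdot> A^-1 = \<Sum>_{J\<subseteq>K} box_J.
  The empty family contributes the identity, and families with at least n members contribute
  nothing, since n + 1 covectors on an n-dimensional space are linearly dependent.\<close>

section \<open>Determinants indexed by finite sets\<close>

definition det_on :: "'a set \<Rightarrow> ('a \<Rightarrow> 'a \<Rightarrow> 'k::comm_ring_1) \<Rightarrow> 'k" where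
  "det_on S M = (\<Sum>\<sigma> | \<sigma> permutes S. of_int (sign \<sigma>) * (\<Prod>a\<in>S. M a (\<sigma> a)))"

lemma det_nat_eq_det_on: "det_nat m M = det_on {..<m} M"
  by (simp add: det_nat_def det_on_def)

lemma det_on_empty [simp]: "det_on {} M = 1"
  by (simp add: det_on_def)

lemma det_on_singleton [simp]: "det_on {a} M = M a a"
  by (simp add: det_on_def)

lemma det_on_cong:
  assumes "\<And>a b. a \<in> S \<Longrightarrow> b \<in> S \<Longrightarrow> M a b = N a b"
  shows "det_on S M = det_on S N"
  unfolding det_on_def
  by (intro sum.cong refl arg_cong[where f="\<lambda>x. _ * x"] prod.cong)
     (auto simp: assms permutes_in_image)

lemma det_on_reindex:
  assumes h: "bij_betw h A B" and "finite A"
  shows "det_on B M = det_on A (\<lambda>a b. M (h a) (h b))"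
proof -
  have inj: "inj_on h A" using h by (simp add: bij_betw_def)
  have h': "bij_betw (inv_into A h) B A" using h by (rule bij_betw_inv_into)
  show ?thesis
    unfolding det_on_def
  proof (rule sym, rule sum.reindex_bij_witness[where j="map_permutation A h"
        and i="map_permutation B (inv_into A h)"])
    fix \<sigma> assume "\<sigma> \<in> {\<sigma>. \<sigma> permutes A}"
    then have \<sigma>: "\<sigma> permutes A" by simp
    show "map_permutation B (inv_into A h) (map_permutation A h \<sigma>) = \<sigma>"
      by (rule map_permutation_compose_inv) (use h \<sigma> inj in \<open>auto simp: inv_into_f_f\<close>)
    show "map_permutation A h \<sigma> \<in> {\<sigma>. \<sigma> permutes B}"
      using map_permutation_permutes[OF h \<sigma>] by simp
    have "(\<Prod>b\<in>B. M b (map_permutation A h \<sigma> b)) = (\<Prod>a\<in>A. M (h a) (map_permutation A h \<sigma> (h a)))"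
      by (rule prod.reindex_bij_betw[OF h, symmetric])
    also have "\<dots> = (\<Prod>a\<in>A. M (h a) (h (\<sigma> a)))"
      by (intro prod.cong refl) (simp add: map_permutation_apply[OF inj])
    finally show "of_int (sign (map_permutation A h \<sigma>)) * (\<Prod>b\<in>B. M b (map_permutation A h \<sigma> b)) =
        of_int (sign \<sigma>) * (\<Prod>a\<in>A. M (h a) (h (\<sigma> a)))"
      using sign_map_permutation[OF inj \<sigma> \<open>finite A\<close>] by simp
  next
    fix \<tau> assume "\<tau> \<in> {\<tau>. \<tau> permutes B}"
    then have \<tau>: "\<tau> permutes B" by simp
    show "map_permutation A h (map_permutation B (inv_into A h) \<tau>) = \<tau>"
      by (rule map_permutation_compose_inv) (use h' \<tau> h in \<open>auto simp: bij_betw_inv_into_right\<close>)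
    show "map_permutation B (inv_into A h) \<tau> \<in> {\<sigma>. \<sigma> permutes A}"
      using map_permutation_permutes[OF h' \<tau>] by simp
  qed
qed

lemma det_on_transpose:
  assumes "finite S"
  shows "det_on S (\<lambda>a b. M b a) = det_on S M"
  unfolding det_on_def
proof (rule sum.reindex_bij_witness[where i=inv and j=inv])
  fix \<sigma> assume "\<sigma> \<in> {\<sigma>. \<sigma> permutes S}"
  then have \<sigma>: "\<sigma> permutes S" by simp
  show "inv (inv \<sigma>) = \<sigma>" using \<sigma> by (simp add: permutes_inv_inv)
  show "inv \<sigma> \<in> {\<sigma>. \<sigma> permutes S}" using \<sigma> by (simp add: permutes_inv)
  have "(\<Prod>a\<in>S. M (\<sigma> a) a) = (\<Prod>a\<in>S. M (\<sigma> a) (inv \<sigma> (\<sigma> a)))"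
    using \<sigma> by (simp add: permutes_inverses)
  also have "\<dots> = (\<Prod>b\<in>S. M b (inv \<sigma> b))"
    using prod.reindex_bij_betw[OF permutes_imp_bij[OF \<sigma>], of "\<lambda>b. M b (inv \<sigma> b)"] by simp
  finally show "of_int (sign (inv \<sigma>)) * (\<Prod>a\<in>S. M a (inv \<sigma> a)) =
      of_int (sign \<sigma>) * (\<Prod>a\<in>S. M (\<sigma> a) a)"
    using sign_inverse[OF permutes_imp_permutation[OF assms \<sigma>]] by simp
qed (auto simp: permutes_inv_inv permutes_inv)

text \<open>Composing with the transposition of the two rows reverses signs, so the determinant equals
  its own negative; this is where characteristic 0 is used.\<close>
lemma det_on_identical_rows:
  fixes M :: "'a \<Rightarrow> 'a \<Rightarrow> 'k::{idom,ring_char_0}"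
  assumes "finite S" and a: "a \<in> S" "a' \<in> S" "a \<noteq> a'"
    and rows: "\<And>b. b \<in> S \<Longrightarrow> M a b = M a' b"
  shows "det_on S M = 0"
proof -
  let ?t = "Transposition.transpose a a'"
  have t: "?t permutes S" using a by (simp add: permutes_swap_id)
  have "det_on S M = - det_on S M"
    unfolding det_on_def sum_negf[symmetric]
  proof (rule sum.reindex_bij_witness[where i="\<lambda>\<sigma>. \<sigma> \<circ> ?t" and j="\<lambda>\<sigma>. \<sigma> \<circ> ?t"])
    fix \<sigma> assume "\<sigma> \<in> {\<sigma>. \<sigma> permutes S}"
    then have \<sigma>: "\<sigma> permutes S" by simp
    show "\<sigma> \<circ> ?t \<circ> ?t = \<sigma>" by (simp add: fun_eq_iff)
    show "\<sigma> \<circ> ?t \<in> {\<sigma>. \<sigma> permutes S}" using permutes_compose[OF t \<sigma>] by simp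
    have "(\<Prod>x\<in>S. M x ((\<sigma> \<circ> ?t) x)) = (\<Prod>x\<in>S. M (?t (?t x)) (\<sigma> (?t x)))"
      by simp
    also have "\<dots> = (\<Prod>y\<in>S. M (?t y) (\<sigma> y))"
      using prod.reindex_bij_betw[OF permutes_imp_bij[OF t], of "\<lambda>y. M (?t y) (\<sigma> y)"] by simp
    also have "\<dots> = (\<Prod>y\<in>S. M y (\<sigma> y))"
    proof (intro prod.cong refl)
      fix y assume "y \<in> S"
      then have "\<sigma> y \<in> S" using \<sigma> by (simp add: permutes_in_image)
      then show "M (?t y) (\<sigma> y) = M y (\<sigma> y)"
        using rows by (auto simp: Transposition.transpose_def)
    qed
    finally have prod_eq: "(\<Prod>x\<in>S. M x ((\<sigma> \<circ> ?t) x)) = (\<Prod>y\<in>S. M y (\<sigma> y))" .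
    have "sign (\<sigma> \<circ> ?t) = sign \<sigma> * sign ?t"
      by (rule sign_compose) (use assms(1) \<sigma> t in \<open>auto intro: permutes_imp_permutation\<close>)
    then have "sign (\<sigma> \<circ> ?t) = - sign \<sigma>" using a by (simp add: sign_swap_id)
    then show "- (of_int (sign (\<sigma> \<circ> ?t)) * (\<Prod>x\<in>S. M x ((\<sigma> \<circ> ?t) x))) =
        of_int (sign \<sigma>) * (\<Prod>a\<in>S. M a (\<sigma> a))"
      using prod_eq by simp
  qed (auto simp: fun_eq_iff intro: permutes_compose[OF t])
  then have "2 * det_on S M = 0" by (metis mult_2 add.right_inverse)
  then show ?thesis by simp
qed

lemma det_on_rows_eq_0_if_not_inj_on:
  fixes M :: "'c \<Rightarrow> 'a \<Rightarrow> 'k::{idom,ring_char_0}"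
  assumes "finite S" and "\<not> inj_on f S"
  shows "det_on S (\<lambda>a b. M (f a) b) = 0"
proof -
  obtain a a' where a: "a \<in> S" "a' \<in> S" "a \<noteq> a'" and "f a = f a'"
    using assms(2) unfolding inj_on_def by blast
  then show ?thesis by (intro det_on_identical_rows[OF assms(1) a]) simp
qed

lemma det_on_linear_rows_sum:
  assumes "finite S" "finite R"
  shows "det_on S (\<lambda>a b. \<Sum>r\<in>R. c a r * N r b) =
    (\<Sum>g\<in>S \<rightarrow>\<^sub>E R. (\<Prod>a\<in>S. c a (g a)) * det_on S (\<lambda>a b. N (g a) b))"
proof -
  have "det_on S (\<lambda>a b. \<Sum>r\<in>R. c a r * N r b) =
     (\<Sum>\<sigma> | \<sigma> permutes S. \<Sum>g\<in>S \<rightarrow>\<^sub>E R.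
        of_int (sign \<sigma>) * ((\<Prod>a\<in>S. c a (g a)) * (\<Prod>a\<in>S. N (g a) (\<sigma> a))))"
    unfolding det_on_def
    by (intro sum.cong refl) (simp add: prod_sum_PiE assms sum_distrib_left prod.distrib)
  also have "\<dots> = (\<Sum>g\<in>S \<rightarrow>\<^sub>E R. \<Sum>\<sigma> | \<sigma> permutes S.
      (\<Prod>a\<in>S. c a (g a)) * (of_int (sign \<sigma>) * (\<Prod>a\<in>S. N (g a) (\<sigma> a))))"
    by (subst sum.swap) (simp add: algebra_simps)
  also have "\<dots> = (\<Sum>g\<in>S \<rightarrow>\<^sub>E R. (\<Prod>a\<in>S. c a (g a)) * det_on S (\<lambda>a b. N (g a) b))"
    by (simp add: det_on_def sum_distrib_left)
  finally show ?thesis .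
qed

lemma det_eq_det_on_unit_rows:
  fixes M :: "'k::comm_ring_1^'n^'n"
  assumes unit: "\<And>c. c \<notin> S \<Longrightarrow> M $ c = axis c 1"
  shows "det M = det_on S (\<lambda>c d. M $ c $ d)"
proof -
  have "det M = (\<Sum>\<sigma> | \<sigma> permutes (UNIV::'n set). of_int (sign \<sigma>) * (\<Prod>c\<in>UNIV. M$c$\<sigma> c))"
    by (simp add: det_def)
  also have "\<dots> = (\<Sum>\<sigma> | \<sigma> permutes S. of_int (sign \<sigma>) * (\<Prod>c\<in>UNIV. M$c$\<sigma> c))"
  proof (rule sum.mono_neutral_right)
    show "finite {\<sigma>. \<sigma> permutes (UNIV::'n set)}" by (simp add: finite_permutations)
    show "{\<sigma>. \<sigma> permutes S} \<subseteq> {\<sigma>. \<sigma> permutes (UNIV::'n set)}"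
      by (auto intro: permutes_subset)
    show "\<forall>\<sigma>\<in>{\<sigma>. \<sigma> permutes UNIV} - {\<sigma>. \<sigma> permutes S}. of_int (sign \<sigma>) * (\<Prod>c\<in>UNIV. M$c$\<sigma> c) = 0"
    proof
      fix \<sigma> assume "\<sigma> \<in> {\<sigma>. \<sigma> permutes (UNIV::'n set)} - {\<sigma>. \<sigma> permutes S}"
      then obtain c where c: "c \<notin> S" "\<sigma> c \<noteq> c"
        unfolding permutes_def by auto
      have "M$c$\<sigma> c = 0" using unit[OF c(1)] c(2) by (simp add: axis_def)
      then have "(\<Prod>c\<in>UNIV. M$c$\<sigma> c) = 0" by (intro prod_zero) auto
      then show "of_int (sign \<sigma>) * (\<Prod>c\<in>UNIV. M$c$\<sigma> c) = 0" by simp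
    qed
  qed
  also have "\<dots> = det_on S (\<lambda>c d. M $ c $ d)"
    unfolding det_on_def
  proof (intro sum.cong refl arg_cong[where f="\<lambda>x. _ * x"])
    fix \<sigma> assume "\<sigma> \<in> {\<sigma>. \<sigma> permutes S}"
    then have \<sigma>: "\<sigma> permutes S" by simp
    show "(\<Prod>c\<in>UNIV. M$c$\<sigma> c) = (\<Prod>c\<in>S. M$c$\<sigma> c)"
      by (rule prod.mono_neutral_right) (auto simp: unit permutes_not_in[OF \<sigma>] axis_def)
  qed
  finally show ?thesis .
qed

lemma det_rows_sum_expand:
  fixes a :: "'n::finite \<Rightarrow> 'b \<Rightarrow> 'k::comm_ring_1^'n"
  assumes "finite X"
  shows "det (\<chi> c. \<Sum>x\<in>X. a c x) = (\<Sum>f | \<forall>c. f c \<in> X. det (\<chi> c. a c (f c)))"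
proof -
  have E: "{f::'n \<Rightarrow> 'b. \<forall>c. f c \<in> X} = PiE UNIV (\<lambda>_. X)"
    by (auto simp: PiE_def Pi_def)
  have "det (\<chi> c. \<Sum>x\<in>X. a c x) = (\<Sum>\<sigma> | \<sigma> permutes (UNIV::'n set). \<Sum>f\<in>PiE UNIV (\<lambda>_. X).
      of_int (sign \<sigma>) * (\<Prod>c\<in>UNIV. a c (f c) $ \<sigma> c))"
    unfolding det_def
    by (intro sum.cong refl) (simp add: sum_component prod_sum_PiE assms sum_distrib_left)
  also have "\<dots> = (\<Sum>f\<in>PiE UNIV (\<lambda>_. X). det (\<chi> c. a c (f c)))"
    by (subst sum.swap) (simp add: det_def)
  finally show ?thesis unfolding E .
qed

lemma det_rows_partial_map:
  fixes f :: "'n::finite \<rightharpoonup> 'i" and u p :: "'i \<Rightarrow> 'k::comm_ring_1^'n"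
  shows "det (\<chi> c. case f c of None \<Rightarrow> axis c 1 | Some i \<Rightarrow> (p i $ c) *s u i) =
    (\<Prod>c\<in>dom f. p (the (f c)) $ c) * det_on (dom f) (\<lambda>c d. u (the (f c)) $ d)"
proof -
  let ?coeff = "\<lambda>c. case f c of None \<Rightarrow> 1 | Some i \<Rightarrow> p i $ c"
  let ?row = "\<lambda>c. case f c of None \<Rightarrow> axis c 1 | Some i \<Rightarrow> u i"
  have "(\<chi> c. case f c of None \<Rightarrow> axis c 1 | Some i \<Rightarrow> (p i $ c) *s u i) = (\<chi> c. ?coeff c *s ?row c)"
    by (simp add: vec_eq_iff split: option.split)
  then have "det (\<chi> c. case f c of None \<Rightarrow> axis c 1 | Some i \<Rightarrow> (p i $ c) *s u i) =
      (\<Prod>c\<in>UNIV. ?coeff c) * det (\<chi> c. ?row c)"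
    by (simp add: det_rows_mul)
  also have "(\<Prod>c\<in>UNIV. ?coeff c) = (\<Prod>c\<in>dom f. p (the (f c)) $ c)"
    by (rule trans[OF prod.mono_neutral_right[of UNIV "dom f"]])
       (auto intro!: prod.cong simp: dom_def split: option.split)
  also have "det (\<chi> c. ?row c) = det_on (dom f) (\<lambda>c d. (\<chi> c. ?row c) $ c $ d)"
    by (rule det_eq_det_on_unit_rows) (auto simp: dom_def)
  also have "\<dots> = det_on (dom f) (\<lambda>c d. u (the (f c)) $ d)"
    by (rule det_on_cong) (auto simp: dom_def)
  finally show ?thesis .
qed

section \<open>Matrix algebra\<close>

lemma matrix_inv_inverse:
  fixes A :: "'a::semiring_1^'n^'m"
  assumes "invertible A"
  shows "A ** matrix_inv A = mat 1" and "matrix_inv A ** A = mat 1"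
proof -
  from assms obtain A' where "A ** A' = mat 1 \<and> A' ** A = mat 1"
    unfolding invertible_def by blast
  then have "A ** matrix_inv A = mat 1 \<and> matrix_inv A ** A = mat 1"
    unfolding matrix_inv_def by (rule someI)
  then show "A ** matrix_inv A = mat 1" and "matrix_inv A ** A = mat 1" by auto
qed

lemma matrix_inv_unique:
  fixes A :: "'a::semiring_1^'n^'n"
  assumes "invertible A" and "A ** Y = mat 1"
  shows "matrix_inv A = Y"
proof -
  have "matrix_inv A = matrix_inv A ** (A ** Y)" using assms(2) by simp
  also have "\<dots> = Y" by (simp add: matrix_mul_assoc matrix_inv_inverse(2)[OF assms(1)])
  finally show ?thesis .
qed

lemma invertible_matrix_mul:
  fixes A B :: "'a::semiring_1^'n^'n"
  assumes "invertible A" and "invertible B"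
  shows "invertible (A ** B)" and "matrix_inv (A ** B) = matrix_inv B ** matrix_inv A"
proof -
  have right: "(A ** B) ** (matrix_inv B ** matrix_inv A) = mat 1"
  proof -
    have "(A ** B) ** (matrix_inv B ** matrix_inv A) = A ** ((B ** matrix_inv B) ** matrix_inv A)"
      by (simp add: matrix_mul_assoc)
    then show ?thesis by (simp add: matrix_inv_inverse assms)
  qed
  have "(matrix_inv B ** matrix_inv A) ** (A ** B) = matrix_inv B ** ((matrix_inv A ** A) ** B)"
    by (simp add: matrix_mul_assoc)
  then have "(matrix_inv B ** matrix_inv A) ** (A ** B) = mat 1"
    by (simp add: matrix_inv_inverse assms)
  with right show inv: "invertible (A ** B)" unfolding invertible_def by blast
  show "matrix_inv (A ** B) = matrix_inv B ** matrix_inv A"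
    by (rule matrix_inv_unique[OF inv right])
qed

lemma matrix_add_rdistrib: "(B + C) ** (A::'a::semiring_1^'n^'m) = B ** A + C ** A"
  by (simp add: vec_eq_iff matrix_matrix_mult_def distrib_right sum.distrib)

lemma matrix_mul_sum: "(M::'a::semiring_1^'n^'m) ** (\<Sum>i\<in>K. X i) = (\<Sum>i\<in>K. M ** X i)"
  by (induct K rule: infinite_finite_induct) (simp_all add: matrix_add_ldistrib)

lemma mat_matrix_mul_nth: "(mat a ** M) $ i $ j = a * (M $ i $ j :: 'a::semiring_1)"
  by (simp add: matrix_matrix_mult_def mat_def if_distrib if_distribR cong: if_cong)

lemma matrix_vector_mul_axis_nth: "(M *v axis c 1) $ r = (M $ r $ c :: 'a::semiring_1)"
  by (simp add: matrix_vector_mult_def axis_def if_distrib if_distribR cong: if_cong)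

lemma matrix_mul_outer: "(M::'k::field^'n^'n) ** outer w q = outer (M *v w) q"
  by (simp add: vec_eq_iff matrix_matrix_mult_def matrix_vector_mult_def outer_def
      sum_distrib_right mult.assoc)

lemma pairing_axis: "pairing (axis r 1) (x::'k::field^'n) = x $ r"
  by (simp add: pairing_def axis_def if_distrib if_distribR cong: if_cong)

lemma add_sum_outer_eq_mul:
  fixes B :: "'k::field^'n^'n"
  assumes "invertible B"
  shows "B + (\<Sum>i\<in>K. outer (v i) (p i)) = B ** (mat 1 + (\<Sum>i\<in>K. outer (matrix_inv B *v v i) (p i)))"
  by (simp add: matrix_add_ldistrib matrix_mul_sum matrix_mul_outer matrix_vector_mul_assoc
      matrix_inv_inverse[OF assms])

section \<open>Partial injections\<close>

definition inv_map :: "'a set \<Rightarrow> ('a \<Rightarrow> 'b) \<Rightarrow> 'b \<rightharpoonup> 'a" where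
  "inv_map J g c = (if c \<in> g ` J then Some (inv_into J g c) else None)"

lemma inv_map_apply: "inj_on g J \<Longrightarrow> a \<in> J \<Longrightarrow> inv_map J g (g a) = Some a"
  by (simp add: inv_map_def)

lemma dom_inv_map: "dom (inv_map J g) = g ` J"
  by (auto simp: inv_map_def dom_def)

lemma ran_inv_map: "inj_on g J \<Longrightarrow> ran (inv_map J g) = J"
  by (auto simp: inv_map_def ran_def inv_into_into) (metis imageI inv_into_f_f)

lemma inj_on_dom_inv_map: "inj_on (inv_map J g) (dom (inv_map J g))"
  by (rule inj_onI) (auto simp: dom_inv_map inv_map_def intro: inv_into_injective)

lemma the_eq_if_inj_on_dom:
  assumes "inj_on f (dom f)" and "f c = Some a"
  shows "(THE c. f c = Some a) = c"
  using assms by (intro the_equality) (auto simp: inj_on_def dom_def)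

lemma inv_map_ran:
  assumes "inj_on f (dom f)"
  defines "g \<equiv> \<lambda>a\<in>ran f. THE c. f c = Some a"
  shows "inj_on g (ran f)" and "inv_map (ran f) g = f"
proof -
  have g: "g a = c" if "f c = Some a" for a c
    using that the_eq_if_inj_on_dom[OF assms(1)] by (auto simp: g_def ran_def)
  then show inj: "inj_on g (ran f)" by (auto simp: inj_on_def ran_def)
  have "inv_map (ran f) g c = f c" for c
  proof (cases "f c")
    case None
    then have "c \<notin> g ` ran f" using g by (auto simp: ran_def)
    then show ?thesis using None by (simp add: inv_map_def)
  next
    case (Some a)
    then show ?thesis using inj g inv_map_apply[of g "ran f" a] by (auto simp: ran_def)
  qed
  then show "inv_map (ran f) g = f" ..
qed

lemma bij_betw_inv_map:
  fixes K :: "'a set"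
  shows "bij_betw (\<lambda>(J, g :: 'a \<Rightarrow> 'b). inv_map J g) (SIGMA J:Pow K. {g \<in> J \<rightarrow>\<^sub>E UNIV. inj_on g J})
     {f. ran f \<subseteq> K \<and> inj_on f (dom f)}" (is "bij_betw ?\<Phi> ?A ?B")
proof -
  let ?\<Psi> = "\<lambda>f :: 'b \<rightharpoonup> 'a. (ran f, \<lambda>a\<in>ran f. THE c. f c = Some a)"
  have left: "?\<Psi> (?\<Phi> x) = x" if "x \<in> ?A" for x
  proof -
    obtain J g where x: "x = (J, g)" and g: "g \<in> J \<rightarrow>\<^sub>E UNIV" "inj_on g J"
      using \<open>x \<in> ?A\<close> by auto
    have "(\<lambda>a\<in>J. THE c. inv_map J g c = Some a) = (\<lambda>a\<in>J. g a)"
      by (intro restrict_ext the_eq_if_inj_on_dom inj_on_dom_inv_map inv_map_apply g(2))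
    then show ?thesis
      using g by (simp add: x ran_inv_map)
  qed
  have right: "?\<Psi> f \<in> ?A \<and> ?\<Phi> (?\<Psi> f) = f" if "f \<in> ?B" for f
    using that inv_map_ran[of f] by simp
  have image: "?\<Phi> x \<in> ?B" if "x \<in> ?A" for x
    using that by (auto simp: ran_inv_map inj_on_dom_inv_map)
  show ?thesis
  proof (rule bij_betw_byWitness[where f'="?\<Psi>"])
    show "\<forall>x\<in>?A. ?\<Psi> (?\<Phi> x) = x" by (intro ballI left)
    show "\<forall>f\<in>?B. ?\<Phi> (?\<Psi> f) = f" by (intro ballI conjunct2[OF right])
    show "?\<Phi> ` ?A \<subseteq> ?B" by (intro image_subsetI image)
    show "?\<Psi> ` ?B \<subseteq> ?A" by (intro image_subsetI conjunct1[OF right])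
  qed
qed

lemma ran_subset_iff_option: "ran f \<subseteq> K \<longleftrightarrow> (\<forall>c. f c \<in> insert None (Some ` K))"
proof
  show "ran f \<subseteq> K \<Longrightarrow> \<forall>c. f c \<in> insert None (Some ` K)"
    by (metis image_eqI insertCI not_None_eq ranI subset_iff)
  assume H: "\<forall>c. f c \<in> insert None (Some ` K)"
  show "ran f \<subseteq> K"
  proof
    fix b assume "b \<in> ran f"
    then obtain c where "f c = Some b" by (auto simp: ran_def)
    with H show "b \<in> K" by (metis image_iff insertE option.distinct(2) option.inject)
  qed
qed

section \<open>The principal-minor expansion\<close>

lemma det_on_pairing:
  fixes p u :: "'a \<Rightarrow> 'k::field_char_0^'n"
  assumes "finite J"
  shows "det_on J (\<lambda>a b. pairing (p a) (u b)) =
    (\<Sum>g | g \<in> J \<rightarrow>\<^sub>E UNIV \<and> inj_on g J. (\<Prod>a\<in>J. p a $ g a) * det_on J (\<lambda>a b. u a $ g b))"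
proof -
  have "det_on J (\<lambda>a b. pairing (p a) (u b)) = det_on J (\<lambda>a b. \<Sum>r\<in>UNIV. p a $ r * u b $ r)"
    by (simp add: pairing_def)
  also have "\<dots> = (\<Sum>g\<in>J \<rightarrow>\<^sub>E UNIV. (\<Prod>a\<in>J. p a $ g a) * det_on J (\<lambda>a b. u b $ g a))"
    by (rule det_on_linear_rows_sum[OF assms finite])
  also have "\<dots> = (\<Sum>g | g \<in> J \<rightarrow>\<^sub>E UNIV \<and> inj_on g J.
      (\<Prod>a\<in>J. p a $ g a) * det_on J (\<lambda>a b. u b $ g a))"
  proof (rule sum.mono_neutral_right)
    show "finite (J \<rightarrow>\<^sub>E (UNIV::'n set))" using assms by (simp add: finite_PiE)
    show "\<forall>g \<in> (J \<rightarrow>\<^sub>E UNIV) - {g. g \<in> J \<rightarrow>\<^sub>E UNIV \<and> inj_on g J}.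
        (\<Prod>a\<in>J. p a $ g a) * det_on J (\<lambda>a b. u b $ g a) = 0"
      using det_on_rows_eq_0_if_not_inj_on[OF assms, where M="\<lambda>r b. u b $ r"] by auto
  qed auto
  also have "\<dots> = (\<Sum>g | g \<in> J \<rightarrow>\<^sub>E UNIV \<and> inj_on g J.
      (\<Prod>a\<in>J. p a $ g a) * det_on J (\<lambda>a b. u a $ g b))"
    by (intro sum.cong refl) (simp add: det_on_transpose[OF assms, of "\<lambda>a b. u a $ _ b"])
  finally show ?thesis .
qed

lemma det_on_pairing_eq_0:
  fixes p u :: "'a \<Rightarrow> 'k::field_char_0^'n"
  assumes "finite J" and "card J > CARD('n)"
  shows "det_on J (\<lambda>a b. pairing (p a) (u b)) = 0"
proof -
  have "\<not> inj_on g J" for g :: "'a \<Rightarrow> 'n"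
    using card_inj_on_le[of g J UNIV] assms(2) by auto
  then show ?thesis by (simp add: det_on_pairing[OF assms(1)])
qed

lemma det_mat1_plus_sum_outer_partial_inj:
  fixes u p :: "'i \<Rightarrow> 'k::field_char_0^'n"
  assumes "finite K"
  shows "det (mat 1 + (\<Sum>i\<in>K. outer (u i) (p i))) =
    (\<Sum>f | ran f \<subseteq> K \<and> inj_on f (dom f).
       (\<Prod>c\<in>dom f. p (the (f c)) $ c) * det_on (dom f) (\<lambda>c d. u (the (f c)) $ d))"
    (is "_ = (\<Sum>f | _. ?F f)")
proof -
  define X where "X = insert None (Some ` K)"
  define a where "a = (\<lambda>c x. case x of None \<Rightarrow> axis c 1 | Some i \<Rightarrow> (p i $ c) *s u i)"
  have "finite X" using assms by (simp add: X_def)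
  have T: "transpose (mat 1 + (\<Sum>i\<in>K. outer (u i) (p i))) = (\<chi> c. \<Sum>x\<in>X. a c x)"
  proof -
    have "(\<Sum>x\<in>X. a c x) = axis c 1 + (\<Sum>i\<in>K. (p i $ c) *s u i)" for c
      unfolding X_def using assms by (simp add: sum.reindex a_def)
    then show ?thesis
      by (simp add: vec_eq_iff transpose_def sum_component outer_def mat_def axis_def mult.commute)
  qed
  have "det (mat 1 + (\<Sum>i\<in>K. outer (u i) (p i))) = det (\<chi> c. \<Sum>x\<in>X. a c x)"
    by (metis T det_transpose)
  also have "\<dots> = (\<Sum>f | \<forall>c. f c \<in> X. det (\<chi> c. a c (f c)))"
    by (rule det_rows_sum_expand[OF \<open>finite X\<close>])
  also have "\<dots> = (\<Sum>f | \<forall>c. f c \<in> X. ?F f)"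
    unfolding a_def by (intro sum.cong refl det_rows_partial_map)
  also have "\<dots> = (\<Sum>f | ran f \<subseteq> K \<and> inj_on f (dom f). ?F f)"
  proof (rule sum.mono_neutral_right)
    show "finite {f::'n \<rightharpoonup> 'i. \<forall>c. f c \<in> X}"
      using finite_set_of_finite_funs[OF finite \<open>finite X\<close>, of UNIV] by simp
    show "{f. ran f \<subseteq> K \<and> inj_on f (dom f)} \<subseteq> {f::'n \<rightharpoonup> 'i. \<forall>c. f c \<in> X}"
      by (auto simp: X_def ran_subset_iff_option)
    show "\<forall>f \<in> {f. \<forall>c. f c \<in> X} - {f. ran f \<subseteq> K \<and> inj_on f (dom f)}. ?F f = 0"
    proof
      fix f :: "'n \<rightharpoonup> 'i"
      assume "f \<in> {f. \<forall>c. f c \<in> X} - {f. ran f \<subseteq> K \<and> inj_on f (dom f)}"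
      then have "\<forall>c. f c \<in> X" "\<not> (ran f \<subseteq> K \<and> inj_on f (dom f))" by simp_all
      then have "\<not> inj_on f (dom f)" unfolding X_def ran_subset_iff_option by blast
      then show "?F f = 0"
        using det_on_rows_eq_0_if_not_inj_on[OF finite, where M="\<lambda>x d. u (the x) $ d"] by simp
    qed
  qed
  finally show ?thesis .
qed

lemma det_mat1_plus_sum_outer:
  fixes u p :: "'i \<Rightarrow> 'k::field_char_0^'n"
  assumes "finite K"
  shows "det (mat 1 + (\<Sum>i\<in>K. outer (u i) (p i))) = (\<Sum>J\<in>Pow K. det_on J (\<lambda>a b. pairing (p a) (u b)))"
proof -
  let ?F = "\<lambda>f :: 'n \<rightharpoonup> 'i. (\<Prod>c\<in>dom f. p (the (f c)) $ c) * det_on (dom f) (\<lambda>c d. u (the (f c)) $ d)"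
  let ?G = "\<lambda>J (g :: 'i \<Rightarrow> 'n). (\<Prod>a\<in>J. p a $ g a) * det_on J (\<lambda>a b. u a $ g b)"
  let ?A = "SIGMA J:Pow K. {g \<in> J \<rightarrow>\<^sub>E UNIV. inj_on g J}"
  have fin: "finite J" if "J \<in> Pow K" for J using that assms by (auto intro: finite_subset)
  have inv_map_term: "?F (inv_map J g) = ?G J g" if "finite J" "inj_on g J" for J g
  proof -
    have "bij_betw g J (g ` J)" using that(2) by (simp add: bij_betw_def)
    then show ?thesis
      by (simp add: dom_inv_map prod.reindex[OF that(2)] det_on_reindex[OF _ that(1)]
          inv_map_apply[OF that(2)] cong: det_on_cong)
  qed
  have "(\<Sum>J\<in>Pow K. det_on J (\<lambda>a b. pairing (p a) (u b))) =
      (\<Sum>J\<in>Pow K. \<Sum>g \<in> {g \<in> J \<rightarrow>\<^sub>E UNIV. inj_on g J}. ?G J g)"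
    by (intro sum.cong refl det_on_pairing fin)
  also have "\<dots> = (\<Sum>(J, g) \<in> ?A. ?G J g)"
    using assms fin by (intro sum.Sigma) (auto simp: finite_PiE)
  also have "\<dots> = (\<Sum>x \<in> ?A. ?F ((\<lambda>(J, g). inv_map J g) x))"
    using fin by (intro sum.cong refl) (auto simp: inv_map_term)
  also have "\<dots> = (\<Sum>f | ran f \<subseteq> K \<and> inj_on f (dom f). ?F f)"
    by (rule sum.reindex_bij_betw[OF bij_betw_inv_map])
  also have "\<dots> = det (mat 1 + (\<Sum>i\<in>K. outer (u i) (p i)))"
    by (rule det_mat1_plus_sum_outer_partial_inj[OF assms, symmetric])
  finally show ?thesis ..
qed

lemma det_mat1_plus_outer: "det (mat 1 + outer w q) = 1 + pairing q (w :: 'k::field_char_0^'n)"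
proof -
  have "Pow {()} = {{}, {()}}" by blast
  then show ?thesis
    using det_mat1_plus_sum_outer[of "{()}" "\<lambda>_. w" "\<lambda>_. q"] by simp
qed

lemma det_add_outer:
  fixes A :: "'k::field_char_0^'n^'n"
  assumes "invertible A"
  shows "det (A + outer v q) = det A * (1 + pairing q (matrix_inv A *v v))"
proof -
  have "A + outer v q = A ** (mat 1 + outer (matrix_inv A *v v) q)"
    by (simp add: matrix_add_ldistrib matrix_mul_outer matrix_vector_mul_assoc
        matrix_inv_inverse[OF assms])
  then show ?thesis by (simp add: det_mul det_mat1_plus_outer)
qed

section \<open>Boxes and the inverse of a rank-k update of the identity\<close>

lemma wedge_eval_eq_det_on:
  fixes p u :: "'a::linorder \<Rightarrow> 'k::field^'n"
  assumes "finite J"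
  shows "wedge_eval (map p (sorted_list_of_set J)) (map u (sorted_list_of_set J)) =
    det_on J (\<lambda>a b. pairing (p a) (u b))"
proof -
  let ?js = "sorted_list_of_set J"
  have "bij_betw ((!) ?js) {..<length ?js} J"
    by (rule bij_betw_nth) (use assms in auto)
  then have "det_on J (\<lambda>a b. pairing (p a) (u b)) =
      det_on {..<length ?js} (\<lambda>a b. pairing (p (?js ! a)) (u (?js ! b)))"
    by (rule det_on_reindex) simp
  also have "\<dots> = wedge_eval (map p ?js) (map u ?js)"
    unfolding wedge_eval_def det_nat_eq_det_on length_map by (intro det_on_cong) auto
  finally show ?thesis ..
qed

text \<open>The extra index \<open>0 \<notin> J\<close> comes first in the sorted list and carries the covector
  \<open>e\<^sub>r\<close> and the vector \<open>e\<^sub>c\<close> of the matrix entry.\<close>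
lemma box_nth_eq_det_on:
  fixes u p :: "nat \<Rightarrow> 'k::field^'n"
  assumes "finite J" and "0 \<notin> J"
  shows "box (map (\<lambda>j. (u j, p j)) (sorted_list_of_set J)) $ r $ c =
    det_on (insert 0 J) (\<lambda>a b. pairing ((p(0 := axis r 1)) a) ((u(0 := axis c 1)) b))"
proof -
  let ?js = "sorted_list_of_set J"
  have js: "sorted_list_of_set (insert 0 J) = 0 # ?js"
  proof -
    have "Min (insert 0 J) = 0" using assms(1) by (simp add: Min_insert2)
    moreover have "insert 0 J - {0} = J" using assms(2) by auto
    ultimately show ?thesis using sorted_list_of_set_nonempty[of "insert 0 J"] assms(1) by simp
  qed
  have "det_on (insert 0 J) (\<lambda>a b. pairing ((p(0 := axis r 1)) a) ((u(0 := axis c 1)) b)) =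
      wedge_eval (map (p(0 := axis r 1)) (0 # ?js)) (map (u(0 := axis c 1)) (0 # ?js))"
    using wedge_eval_eq_det_on[of "insert 0 J" "p(0 := axis r 1)" "u(0 := axis c 1)"] assms(1) js
    by simp
  also have "\<dots> = wedge_eval (axis r 1 # map p ?js) (axis c 1 # map u ?js)"
  proof -
    have "map (p(0 := axis r 1)) ?js = map p ?js" "map (u(0 := axis c 1)) ?js = map u ?js"
      using assms by (auto intro!: map_cong)
    then show ?thesis by (simp only: list.map fun_upd_same)
  qed
  also have "\<dots> = box (map (\<lambda>j. (u j, p j)) ?js) $ r $ c"
    by (simp add: box_def o_def)
  finally show ?thesis ..
qed

lemma box_eq_0_if_card_ge:
  fixes u p :: "nat \<Rightarrow> 'k::field_char_0^'n"
  assumes "finite J" and "0 \<notin> J" and "card J \<ge> CARD('n)"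
  shows "box (map (\<lambda>j. (u j, p j)) (sorted_list_of_set J)) = 0"
proof -
  have "card (insert 0 J) > CARD('n)" using assms by simp
  then have "box (map (\<lambda>j. (u j, p j)) (sorted_list_of_set J)) $ r $ c = 0" for r c
    unfolding box_nth_eq_det_on[OF assms(1,2)] by (rule det_on_pairing_eq_0[rotated]) (use assms in simp)
  then show ?thesis by (simp add: vec_eq_iff)
qed

lemma box_Nil: "box ([] :: (('k::field^'n) \<times> ('k^'n)) list) = mat 1"
proof -
  have "box ([] :: (('k::field^'n) \<times> ('k^'n)) list) $ r $ c = mat 1 $ r $ c" for r c
    using box_nth_eq_det_on[of "{}" "\<lambda>_. 0 :: 'k^'n" "\<lambda>_. 0 :: 'k^'n" r c]
    by (simp add: pairing_axis mat_def) (simp add: axis_def)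
  then show ?thesis by (simp add: vec_eq_iff)
qed

lemma det_add_outer_axis:
  fixes u p :: "nat \<Rightarrow> 'k::field_char_0^'n" and K :: "nat set"
  defines "A \<equiv> mat 1 + (\<Sum>i\<in>K. outer (u i) (p i))"
  assumes "finite K" and "0 \<notin> K"
  shows "det (A + outer (axis c 1) (axis r 1)) =
    det A + (\<Sum>J\<in>Pow K. box (map (\<lambda>j. (u j, p j)) (sorted_list_of_set J))) $ r $ c"
proof -
  define u' where "u' = u(0 := axis c 1)"
  define p' where "p' = p(0 := axis r 1)"
  let ?D = "\<lambda>J. det_on J (\<lambda>a b. pairing (p' a) (u' b))"
  have "(\<Sum>i\<in>K. outer (u' i) (p' i)) = (\<Sum>i\<in>K. outer (u i) (p i))"
    using assms(3) by (intro sum.cong refl) (auto simp: u'_def p'_def)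
  then have "A + outer (axis c 1) (axis r 1) = mat 1 + (\<Sum>i\<in>insert 0 K. outer (u' i) (p' i))"
    using assms(2,3) by (simp add: A_def u'_def p'_def algebra_simps)
  then have "det (A + outer (axis c 1) (axis r 1)) = (\<Sum>J\<in>Pow (insert 0 K). ?D J)"
    using det_mat1_plus_sum_outer[of "insert 0 K" u' p'] assms(2) by simp
  also have "\<dots> = (\<Sum>J\<in>Pow K. ?D J) + (\<Sum>J\<in>Pow K. ?D (insert 0 J))"
  proof -
    have "Pow K \<inter> insert 0 ` Pow K = {}" using assms(3) by auto
    moreover have "inj_on (insert 0) (Pow K)"
    proof (rule inj_onI)
      fix X Y assume "X \<in> Pow K" "Y \<in> Pow K" and eq: "insert 0 X = insert 0 Y"
      then have "0 \<notin> X" "0 \<notin> Y" using assms(3) by auto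
      with eq show "X = Y" by (simp add: insert_ident)
    qed
    ultimately show ?thesis
      unfolding Pow_insert using assms(2) by (simp add: sum.union_disjoint sum.reindex)
  qed
  also have "(\<Sum>J\<in>Pow K. ?D J) = det A"
  proof -
    have "(\<Sum>J\<in>Pow K. ?D J) = (\<Sum>J\<in>Pow K. det_on J (\<lambda>a b. pairing (p a) (u b)))"
      using assms(3) by (intro sum.cong refl det_on_cong) (auto simp: p'_def u'_def)
    then show ?thesis unfolding A_def by (simp add: det_mat1_plus_sum_outer[OF assms(2)])
  qed
  also have "(\<Sum>J\<in>Pow K. ?D (insert 0 J)) =
      (\<Sum>J\<in>Pow K. box (map (\<lambda>j. (u j, p j)) (sorted_list_of_set J))) $ r $ c"
    unfolding sum_component p'_def u'_def using assms(2,3)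
    by (intro sum.cong refl box_nth_eq_det_on[symmetric]) (auto intro: finite_subset)
  finally show ?thesis .
qed

lemma sum_box_Pow_eq_det_matrix_inv:
  fixes u p :: "nat \<Rightarrow> 'k::field_char_0^'n" and K :: "nat set"
  defines "A \<equiv> mat 1 + (\<Sum>i\<in>K. outer (u i) (p i))"
  assumes "finite K" and "0 \<notin> K" and "invertible A"
  shows "(\<Sum>J\<in>Pow K. box (map (\<lambda>j. (u j, p j)) (sorted_list_of_set J))) = mat (det A) ** matrix_inv A"
proof -
  have "(\<Sum>J\<in>Pow K. box (map (\<lambda>j. (u j, p j)) (sorted_list_of_set J))) $ r $ c =
      det A * matrix_inv A $ r $ c" for r c
  proof -
    have "det A + (\<Sum>J\<in>Pow K. box (map (\<lambda>j. (u j, p j)) (sorted_list_of_set J))) $ r $ c =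
        det (A + outer (axis c 1) (axis r 1))"
      unfolding A_def by (rule det_add_outer_axis[OF assms(2,3), symmetric])
    also have "\<dots> = det A * (1 + matrix_inv A $ r $ c)"
      by (simp add: det_add_outer[OF assms(4)] pairing_axis matrix_vector_mul_axis_nth)
    finally show ?thesis by (simp add: algebra_simps)
  qed
  then show ?thesis by (simp add: vec_eq_iff mat_matrix_mul_nth)
qed

lemma sum_box_Pow_by_card:
  fixes u p :: "nat \<Rightarrow> 'k::field_char_0^'n"
  assumes "finite K" and "0 \<notin> K"
  shows "(\<Sum>J\<in>Pow K. box (map (\<lambda>j. (u j, p j)) (sorted_list_of_set J))) =
    mat 1 + (\<Sum>i=1..min (CARD('n) - 1) (card K).
      \<Sum>J | J \<subseteq> K \<and> card J = i. box (map (\<lambda>j. (u j, p j)) (sorted_list_of_set J)))"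
proof -
  define bx where "bx = (\<lambda>J. box (map (\<lambda>j. (u j, p j)) (sorted_list_of_set J)))"
  define m where "m = min (CARD('n) - 1) (card K)"
  define S where "S = {J. J \<subseteq> K \<and> card J \<le> m}"
  have "finite S" using assms(1) by (simp add: S_def)
  have "(\<Sum>J\<in>Pow K. bx J) = (\<Sum>J\<in>S. bx J)"
  proof (rule sum.mono_neutral_right)
    show "\<forall>J\<in>Pow K - S. bx J = 0"
    proof
      fix J assume J: "J \<in> Pow K - S"
      then have "finite J" "0 \<notin> J" using assms finite_subset by auto
      moreover have "card J \<le> card K" using J assms(1) by (simp add: card_mono)
      then have "card J \<ge> CARD('n)" using J by (auto simp: S_def m_def)
      ultimately show "bx J = 0" unfolding bx_def by (rule box_eq_0_if_card_ge)
    qed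
  qed (use assms(1) in \<open>auto simp: S_def\<close>)
  also have "\<dots> = (\<Sum>i\<in>{0..m}. \<Sum>J | J \<in> S \<and> card J = i. bx J)"
    by (rule sum.group[symmetric]) (use \<open>finite S\<close> in \<open>auto simp: S_def\<close>)
  also have "\<dots> = (\<Sum>J | J \<in> S \<and> card J = 0. bx J) + (\<Sum>i\<in>{1..m}. \<Sum>J | J \<in> S \<and> card J = i. bx J)"
    by (subst sum.atLeast_Suc_atMost) simp_all
  also have "{J. J \<in> S \<and> card J = 0} = {{}}"
    by (auto simp: S_def dest: finite_subset[OF _ assms(1)])
  also have "(\<Sum>i\<in>{1..m}. \<Sum>J | J \<in> S \<and> card J = i. bx J) = (\<Sum>i\<in>{1..m}. \<Sum>J | J \<subseteq> K \<and> card J = i. bx J)"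
    by (intro sum.cong refl arg_cong[where f="\<lambda>X. sum bx X"]) (auto simp: S_def)
  finally show ?thesis by (simp add: bx_def m_def box_Nil)
qed

lemma matrix_inv_mat1_plus_sum_outer:
  fixes u p :: "nat \<Rightarrow> 'k::field_char_0^'n"
  assumes "finite K" and "0 \<notin> K" and "det (mat 1 + (\<Sum>i\<in>K. outer (u i) (p i))) \<noteq> 0"
  shows "matrix_inv (mat 1 + (\<Sum>i\<in>K. outer (u i) (p i))) =
    mat (1 / det (mat 1 + (\<Sum>i\<in>K. outer (u i) (p i)))) **
      (mat 1 + (\<Sum>i=1..min (CARD('n) - 1) (card K).
        \<Sum>J | J \<subseteq> K \<and> card J = i. box (map (\<lambda>j. (u j, p j)) (sorted_list_of_set J))))"
proof -
  have "invertible (mat 1 + (\<Sum>i\<in>K. outer (u i) (p i)))"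
    using assms(3) by (simp add: invertible_det_nz)
  then have "mat 1 + (\<Sum>i=1..min (CARD('n) - 1) (card K).
        \<Sum>J | J \<subseteq> K \<and> card J = i. box (map (\<lambda>j. (u j, p j)) (sorted_list_of_set J))) =
      mat (det (mat 1 + (\<Sum>i\<in>K. outer (u i) (p i)))) ** matrix_inv (mat 1 + (\<Sum>i\<in>K. outer (u i) (p i)))"
    using sum_box_Pow_eq_det_matrix_inv[where u=u and p=p and K=K] sum_box_Pow_by_card[where u=u and p=p and K=K]
      assms(1,2) by simp
  then show ?thesis using assms(3) by (simp add: vec_eq_iff mat_matrix_mul_nth)
qed

lemma matrix_inv_add_sum_outer:
  fixes B :: "'k::field_char_0^'n^'n" and v p :: "nat \<Rightarrow> 'k^'n"
  assumes u: "u = (\<lambda>i. matrix_inv B *v v i)" and A: "A = mat 1 + (\<Sum>i=1..k. outer (u i) (p i))"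
    and "invertible B" and "det A \<noteq> 0"
  shows "invertible (B + (\<Sum>i=1..k. outer (v i) (p i)))"
    and "matrix_inv (B + (\<Sum>i=1..k. outer (v i) (p i))) = mat (1 / det A) ** matrix_inv B
           + mat (1 / det A) ** ((\<Sum>i=1..min (CARD('n) - 1) k.
                 \<Sum>J | J \<subseteq> {1..k} \<and> card J = i.
                   box (map (\<lambda>j. (u j, p j)) (sorted_list_of_set J))) ** matrix_inv B)"
proof -
  have B': "B + (\<Sum>i=1..k. outer (v i) (p i)) = B ** A"
    unfolding A u by (rule add_sum_outer_eq_mul[OF \<open>invertible B\<close>])
  have "invertible A" using \<open>det A \<noteq> 0\<close> by (simp add: invertible_det_nz)
  then show "invertible (B + (\<Sum>i=1..k. outer (v i) (p i)))"
    unfolding B' by (rule invertible_matrix_mul[OF \<open>invertible B\<close>])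
  define S where "S = (\<Sum>i=1..min (CARD('n) - 1) k.
    \<Sum>J | J \<subseteq> {1..k} \<and> card J = i. box (map (\<lambda>j. (u j, p j)) (sorted_list_of_set J)))"
  have inv_A: "matrix_inv A = mat (1 / det A) ** (mat 1 + S)"
    using matrix_inv_mat1_plus_sum_outer[of "{1..k}" u p] \<open>det A \<noteq> 0\<close> by (simp add: A S_def)
  have "matrix_inv (B + (\<Sum>i=1..k. outer (v i) (p i))) = matrix_inv A ** matrix_inv B"
    unfolding B' by (rule invertible_matrix_mul(2)[OF \<open>invertible B\<close> \<open>invertible A\<close>])
  also have "\<dots> = mat (1 / det A) ** matrix_inv B + mat (1 / det A) ** (S ** matrix_inv B)"
    unfolding inv_A by (simp add: matrix_add_ldistrib matrix_add_rdistrib matrix_mul_assoc)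
  finally show "matrix_inv (B + (\<Sum>i=1..k. outer (v i) (p i))) = mat (1 / det A) ** matrix_inv B
           + mat (1 / det A) ** ((\<Sum>i=1..min (CARD('n) - 1) k.
                 \<Sum>J | J \<subseteq> {1..k} \<and> card J = i.
                   box (map (\<lambda>j. (u j, p j)) (sorted_list_of_set J))) ** matrix_inv B)"
    unfolding S_def .
qed

theorem mainTheorem2:
  shows
  "(\<forall>(B::real^'n^'n) (v::nat \<Rightarrow> real^'n) (p::nat \<Rightarrow> real^'n) (k::nat).
      let B' = B + (\<Sum>i=1..k. outer (v i) (p i));
          u = (\<lambda>i. matrix_inv B *v v i);
          A = mat 1 + (\<Sum>i=1..k. outer (u i) (p i))
      in invertible B \<and> det A \<noteq> 0 \<longrightarrow>
         invertible B' \<and>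
         matrix_inv B' = mat (1 / det A) ** matrix_inv B
           + mat (1 / det A) ** ((\<Sum>i=1..min (CARD('n) - 1) k.
                 \<Sum>J | J \<subseteq> {1..k} \<and> card J = i.
                   box (map (\<lambda>j. (u j, p j)) (sorted_list_of_set J))) ** matrix_inv B))
   \<and>
   (\<forall>(B::complex^'n^'n) (v::nat \<Rightarrow> complex^'n) (p::nat \<Rightarrow> complex^'n) (k::nat).
      let B' = B + (\<Sum>i=1..k. outer (v i) (p i));
          u = (\<lambda>i. matrix_inv B *v v i);
          A = mat 1 + (\<Sum>i=1..k. outer (u i) (p i))
      in invertible B \<and> det A \<noteq> 0 \<longrightarrow>
         invertible B' \<and>
         matrix_inv B' = mat (1 / det A) ** matrix_inv B
           + mat (1 / det A) ** ((\<Sum>i=1..min (CARD('n) - 1) k.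
                 \<Sum>J | J \<subseteq> {1..k} \<and> card J = i.
                   box (map (\<lambda>j. (u j, p j)) (sorted_list_of_set J))) ** matrix_inv B))"
  unfolding Let_def
  by (intro conjI allI impI; elim conjE; rule matrix_inv_add_sum_outer[OF refl refl]; assumption)

end
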